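(* Let $(E,\rho)$ be a Polish metric space and $\Psi=\{\Psi(t)\}_{t\geq0}$ an $E$-valued time-homogeneous Markov process with transition semigroup $\{P(t)\}_{t\geq 0}$ and initial distribution $\mu$. Let $V:E\to[0,\infty)$ be continuous and assume: (a) $P(t)(C_b(E))\subset C_b(E)$ for all $t\geq0$; (b) $\{P(t)\}$ has a unique invariant probability measure $\mu_*$, and there are $\gamma>0$ and $C:\{\nu\in\mathcal{M}_1(E):\int V\,d\nu<\infty\}\to[0,\infty)$ with $d_{\mathrm{FM}}(\nu P(t),\mu_* )\leq C(\nu)e^{-\gamma t}$ for all $t\geq0$ and such $\nu$, where $C(\delta_x)=\varkappa(V(x)+1)^{1/2}$ for some $\varkappa>0$; (c) there exist $A,B\geq 0$, $\Gamma>0$ with $P(t)V^2(x)\leq Ae^{-\Gamma t}V^2(x)+B$ for all $x,t$; (d) $\int_E V^2\,d\mu<\infty$. Fix $g\in\operatorname{Lip}_b(E)$, let $\bar g=g-\int g\,d\mu_*$, $\chi(x)=\int_0^\infty P(t)\bar g(x)\,dt$, and $Z(n)=\chi(\Psi(n))-\chi(\Psi(n-1))+\int_{n-1}^n\bar g(\Psi(s))\,ds$ for $n\in\mathbb{N}$. Then for every $p\in(0,4]$ there exist constants $\tilde A_p,\tilde B_p\geq0$ and $\Gamma_p>0$ such that $$\int_E\mathbb{E}_x(|Z(i)|^p)\,(\mu P(t))(dx)\leq\tilde A_pe^{-\Gamma_p(i+t)}+\tilde B_p\quad\text{for all }i\in\mathbb{N},\ t\geq0,$$ and moreover $\sup_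{i\in\mathbb{N}}\mathbb{E}_{\mu_*}(|Z(i)|^p)<\infty$.
   Context: $\mathcal{M}_1(E)$: Borel probability measures; $\operatorname{Lip}_b(E)$: bounded Lipschitz functions with $\|f\|_{\mathrm{BL}}=\max\{\|f\|_\infty,\sup_{x\neq y}|f(x)-f(y)|/\rho(x,y)\}$; $d_{\mathrm{FM}}(\mu,\nu)=\sup\{|\int f\,d\mu-\int f\,d\nu|:\|f\|_{\mathrm{BL}}\leq1\}$. $P(t)f(x)=\int f(y)P(t)(x,dy)$, $\nu P(t)=\int P(t)(x,\cdot)\nu(dx)$. $\mathbb{E}_x$ and $\mathbb{E}_{\mu_*}$ denote expectation for the process started at $\delta_x$, respectively with initial distribution $\mu_*$. *)

theory Defs
  imports "HOL-Probability.Probability"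
begin

definition Pf :: "(real \<Rightarrow> 'a \<Rightarrow> 'a measure) \<Rightarrow> real \<Rightarrow> ('a \<Rightarrow> real) \<Rightarrow> 'a \<Rightarrow> real" where
  "Pf P t f x = (\<integral>y. f y \<partial>(P t x))"

definition BL_le1 :: "('a::metric_space \<Rightarrow> real) \<Rightarrow> bool" where
  "BL_le1 f \<longleftrightarrow> (\<forall>x. \<bar>f x\<bar> \<le> 1) \<and> (\<forall>x y. \<bar>f x - f y\<bar> \<le> dist x y)"

definition d_FM :: "'a::metric_space measure \<Rightarrow> 'a measure \<Rightarrow> real" where
  "d_FM \<mu> \<nu> = Sup {\<bar>(\<integral>x. f x \<partial>\<mu>) - (\<integral>x. f x \<partial>\<nu>)\<bar> | f. BL_le1 f \<and> f \<in> borel_measurable borel}"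

definition prob_borel :: "'a::topological_space measure \<Rightarrow> bool" where
  "prob_borel \<nu> \<longleftrightarrow> prob_space \<nu> \<and> sets \<nu> = sets borel"

definition invariant :: "(real \<Rightarrow> 'a::topological_space \<Rightarrow> 'a measure) \<Rightarrow> 'a measure \<Rightarrow> bool" where
  "invariant P \<nu> \<longleftrightarrow> prob_borel \<nu> \<and> (\<forall>t\<ge>0. (\<nu> \<bind> P t) = \<nu>)"

definition nat_filtration :: "'w measure \<Rightarrow> (real \<Rightarrow> 'w \<Rightarrow> 'a::topological_space) \<Rightarrow> real \<Rightarrow> 'w measure" where
  "nat_filtration S X s = sigma (space S) (\<Union>r\<in>{0..s}. {X r -` A \<inter> space S | A. A \<in> sets borel})"

definition markov_family ::
  "'w measure \<Rightarrow> ('a::topological_space \<Rightarrow> 'w measure) \<Rightarrow> (real \<Rightarrow> 'w \<Rightarrow> 'a) \<Rightarrow> (real \<Rightarrow> 'a \<Rightarrow> 'a measure) \<Rightarrow> bool" where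
  "markov_family S Mx X P \<longleftrightarrow>
     (\<forall>t\<ge>0. P t \<in> borel \<rightarrow>\<^sub>M prob_algebra borel) \<and>
     Mx \<in> borel \<rightarrow>\<^sub>M prob_algebra S \<and>
     (\<lambda>(t, \<omega>). X t \<omega>) \<in> (restrict_space borel {0..} \<Otimes>\<^sub>M S) \<rightarrow>\<^sub>M borel \<and>
     (\<forall>x. AE \<omega> in Mx x. X 0 \<omega> = x) \<and>
     (\<forall>x s t f A. s \<ge> 0 \<longrightarrow> t \<ge> 0 \<longrightarrow> f \<in> borel_measurable borel \<longrightarrow> bounded (range f) \<longrightarrow>
        A \<in> sets (nat_filtration S X s) \<longrightarrow>
        (\<integral>\<omega>. indicator A \<omega> * f (X (s + t) \<omega>) \<partial>Mx x) =
        (\<integral>\<omega>. indicator A \<omega> * Pf P t f (X s \<omega>) \<partial>Mx x))"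

definition centred :: "'a measure \<Rightarrow> ('a \<Rightarrow> real) \<Rightarrow> 'a \<Rightarrow> real" where
  "centred \<mu>s g x = g x - (\<integral>y. g y \<partial>\<mu>s)"

definition chi :: "(real \<Rightarrow> 'a \<Rightarrow> 'a measure) \<Rightarrow> 'a measure \<Rightarrow> ('a \<Rightarrow> real) \<Rightarrow> 'a \<Rightarrow> real" where
  "chi P \<mu>s g x = (LINT t:{0..}|lborel. Pf P t (centred \<mu>s g) x)"

definition Zinc :: "(real \<Rightarrow> 'a \<Rightarrow> 'a measure) \<Rightarrow> 'a measure \<Rightarrow> ('a \<Rightarrow> real) \<Rightarrow> (real \<Rightarrow> 'w \<Rightarrow> 'a)
    \<Rightarrow> nat \<Rightarrow> 'w \<Rightarrow> real" where
  "Zinc P \<mu>s g X n \<omega> = chi P \<mu>s g (X (real n) \<omega>) - chi P \<mu>s g (X (real n - 1) \<omega>)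
      + (LINT s:{real n - 1..real n}|lborel. centred \<mu>s g (X s \<omega>))"

end

theory Submission
  imports Defs "HOL-Library.Sum_of_Squares"
begin

(* Hypothesis (b) applied to Dirac initial states gives
   |P(t) gbar (x)| <= ||g||_BL * kappa * sqrt (V x + 1) * exp (- gamma t), so
   |chi| <= c * sqrt (V + 1); as gbar is bounded, the increment satisfies
   |Z(i)| <= D * (sqrt (V (Psi i) + 1) + sqrt (V (Psi (i - 1)) + 1)).  Hence
   |Z(i)|^p <= 1 + |Z(i)|^4 is dominated by an affine function of V^2 (Psi i) and
   V^2 (Psi (i - 1)).  By the Markov property Psi(s) has law P(s)(x, .) under P_x, so the
   Lyapunov bound (c) gives E_x |Z(i)|^p <= alpha + beta * exp (- Gamma i) * V^2 x;
   integrating against mu P(t) and applying (c) once more yields the first estimate with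
   Gamma_p = Gamma.  For mu_*, invariance and (c) force the integral of V^2 to be at most B. *)

(* No integrability hypothesis: a non-integrable f has Bochner integral 0, which is the
   value chi and the time integral in Zinc take where they diverge. *)
lemma norm_integral_le_of_nn_integral_le:
  fixes f :: "'x \<Rightarrow> real"
  assumes "(\<integral>\<^sup>+x. ennreal (norm (f x)) \<partial>M) \<le> ennreal c" "0 \<le> c"
  shows "norm (integral\<^sup>L M f) \<le> c"
proof (cases "integrable M f")
  case True
  then have "ennreal (norm (integral\<^sup>L M f)) \<le> ennreal c"
    using integral_norm_bound_ennreal assms(1) order_trans by blast
  then show ?thesis using assms(2) by (simp add: ennreal_le_iff)
qed (use assms(2) in \<open>simp add: not_integrable_integral_eq\<close>)

lemma (in prob_space) abs_integral_le_const:
  fixes f :: "'a \<Rightarrow> real"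
  assumes "\<And>x. \<bar>f x\<bar> \<le> c"
  shows "\<bar>integral\<^sup>L M f\<bar> \<le> c"
proof -
  have "0 \<le> c" using assms order_trans abs_ge_zero by blast
  have "(\<integral>\<^sup>+x. ennreal (norm (f x)) \<partial>M) \<le> (\<integral>\<^sup>+x. ennreal c \<partial>M)"
    using assms by (intro nn_integral_mono ennreal_leI) auto
  also have "\<dots> = ennreal c" by (simp add: emeasure_space_1)
  finally show ?thesis using norm_integral_le_of_nn_integral_le \<open>0 \<le> c\<close> by simp
qed

lemma nn_integral_le_of_truncations_le:
  fixes h :: "'x \<Rightarrow> real"
  assumes [measurable]: "h \<in> borel_measurable M"
    and trunc: "\<And>N::nat. (\<integral>\<^sup>+x. ennreal (min (h x) (real N)) \<partial>M) \<le> c"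
  shows "(\<integral>\<^sup>+x. ennreal (h x) \<partial>M) \<le> c"
proof -
  have "ennreal (h x) = (SUP N. ennreal (min (h x) (real N)))" for x
  proof (rule antisym)
    obtain N :: nat where "h x \<le> real N" using real_arch_simple by blast
    then show "ennreal (h x) \<le> (SUP N. ennreal (min (h x) (real N)))"
      by (metis SUP_upper UNIV_I min_absorb1)
  qed (intro SUP_least ennreal_leI, simp)
  then have "(\<integral>\<^sup>+x. ennreal (h x) \<partial>M) = (\<integral>\<^sup>+x. (SUP N. ennreal (min (h x) (real N))) \<partial>M)"
    by simp
  also have "\<dots> = (SUP N. \<integral>\<^sup>+x. ennreal (min (h x) (real N)) \<partial>M)"
    by (rule nn_integral_monotone_convergence_SUP)
      (auto intro!: monoI le_funI ennreal_leI simp: min_def)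
  also have "\<dots> \<le> c" using trunc by (intro SUP_least)
  finally show ?thesis .
qed

lemma abs_set_integral_exp_decay_le:
  fixes F :: "real \<Rightarrow> real"
  assumes "\<And>t. t \<ge> 0 \<Longrightarrow> \<bar>F t\<bar> \<le> K * exp (- \<gamma> * t)" "\<gamma> > 0" "K \<ge> 0"
  shows "\<bar>LINT t:{0..}|lborel. F t\<bar> \<le> K / \<gamma>"
proof -
  have "(\<integral>\<^sup>+t. ennreal (norm (indicator {0..} t *\<^sub>R F t)) \<partial>lborel) \<le>
      (\<integral>\<^sup>+t. ennreal (K / \<gamma>) * ennreal (exponential_density \<gamma> t) \<partial>lborel)"
  proof (intro nn_integral_mono)
    fix t :: real
    show "ennreal (norm (indicator {0..} t *\<^sub>R F t)) \<le> ennreal (K / \<gamma>) * ennreal (exponential_density \<gamma> t)"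
    proof (cases "t \<ge> 0")
      case True
      have "\<bar>F t\<bar> \<le> K / \<gamma> * (\<gamma> * exp (- t * \<gamma>))"
        using assms(1)[OF True] assms(2) by (simp add: mult.commute)
      then show ?thesis using True assms(2,3)
        by (simp add: exponential_density_def ennreal_mult[symmetric])
    qed simp
  qed
  also have "\<dots> = ennreal (K / \<gamma>) * (\<integral>\<^sup>+t. ennreal (exponential_density \<gamma> t) \<partial>lborel)"
    by (rule nn_integral_cmult) measurable
  also have "\<dots> = ennreal (K / \<gamma>)"
    using nn_integral_erlang_ith_moment[of \<gamma> 0 0] assms(2) by simp
  finally have "norm (LINT t:{0..}|lborel. F t) \<le> K / \<gamma>"
    unfolding set_lebesgue_integral_def
    using assms(2,3) by (intro norm_integral_le_of_nn_integral_le) auto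
  then show ?thesis by simp
qed

lemma abs_set_integral_Icc_le:
  fixes h :: "real \<Rightarrow> real"
  assumes "\<And>s. \<bar>h s\<bar> \<le> c" "a \<le> b"
  shows "\<bar>LINT s:{a..b}|lborel. h s\<bar> \<le> c * (b - a)"
proof -
  have "0 \<le> c" using assms(1) order_trans abs_ge_zero by blast
  have "(\<integral>\<^sup>+s. ennreal (norm (indicator {a..b} s *\<^sub>R h s)) \<partial>lborel) \<le>
      (\<integral>\<^sup>+s. ennreal c * indicator {a..b} s \<partial>lborel)"
    using assms(1) by (intro nn_integral_mono) (auto intro: ennreal_leI split: split_indicator)
  also have "\<dots> = ennreal (c * (b - a))"
    using assms(2) \<open>0 \<le> c\<close> by (simp add: nn_integral_cmult_indicator ennreal_mult)
  finally have "norm (LINT s:{a..b}|lborel. h s) \<le> c * (b - a)"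
    unfolding set_lebesgue_integral_def
    using assms(2) \<open>0 \<le> c\<close> by (intro norm_integral_le_of_nn_integral_le) auto
  then show ?thesis by simp
qed

lemma powr_le_one_plus_power4:
  fixes z p :: real
  assumes "0 \<le> z" "0 < p" "p \<le> 4"
  shows "z powr p \<le> 1 + z ^ 4"
proof (cases "z \<le> 1")
  case True
  then have "z powr p \<le> 1" using assms by (intro powr_le1) auto
  then show ?thesis by (simp add: add_increasing2)
next
  case False
  then have "z powr p \<le> z powr 4" using assms by (intro powr_mono) auto
  then show ?thesis using False by (simp add: powr_realpow)
qed

lemma sqrt_sum_power4_le:
  fixes u v :: real
  assumes "0 \<le> u" "0 \<le> v"
  shows "(sqrt (u + 1) + sqrt (v + 1)) ^ 4 \<le> 16 * (u\<^sup>2 + v\<^sup>2 + 2)"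
proof -
  define a b where "a = sqrt (u + 1)" and "b = sqrt (v + 1)"
  have "a \<ge> 0" "b \<ge> 0" "a\<^sup>2 = u + 1" "b\<^sup>2 = v + 1" using assms by (auto simp: a_def b_def)
  have "(a + b) ^ 4 \<le> 8 * ((a\<^sup>2)\<^sup>2 + (b\<^sup>2)\<^sup>2)" using \<open>a \<ge> 0\<close> \<open>b \<ge> 0\<close> by sos
  also have "\<dots> = 8 * ((u + 1)\<^sup>2 + (v + 1)\<^sup>2)" using \<open>a\<^sup>2 = u + 1\<close> \<open>b\<^sup>2 = v + 1\<close> by simp
  also have "\<dots> \<le> 16 * (u\<^sup>2 + v\<^sup>2 + 2)" by sos
  finally show ?thesis unfolding a_def b_def .
qed

lemma powr_le_of_le_sqrt_sum:
  fixes z p D u v :: real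
  assumes "0 \<le> z" "z \<le> D * (sqrt (u + 1) + sqrt (v + 1))" "0 \<le> D" "0 \<le> u" "0 \<le> v"
    and "0 < p" "p \<le> 4"
  shows "z powr p \<le> (1 + 32 * D ^ 4) + 16 * D ^ 4 * (u\<^sup>2 + v\<^sup>2)"
proof -
  have "z ^ 4 \<le> D ^ 4 * (sqrt (u + 1) + sqrt (v + 1)) ^ 4"
    using assms(1-3) by (metis power_mono power_mult_distrib)
  also have "\<dots> \<le> D ^ 4 * (16 * (u\<^sup>2 + v\<^sup>2 + 2))"
    using sqrt_sum_power4_le assms(4,5) by (intro mult_left_mono) auto
  finally show ?thesis
    using powr_le_one_plus_power4[OF assms(1,6,7)] by (simp add: algebra_simps)
qed

lemma prob_algebra_kernelD:
  assumes "K \<in> M \<rightarrow>\<^sub>M prob_algebra N" "x \<in> space M"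
  shows "prob_space (K x)" "sets (K x) = sets N"
  using measurable_space[OF assms] by (auto simp: space_prob_algebra)

lemma abs_integral_diff_le_d_FM:
  fixes N \<mu>s :: "'a::metric_space measure"
  assumes "prob_space N" "prob_space \<mu>s" "BL_le1 f" "f \<in> borel_measurable borel"
  shows "\<bar>(\<integral>x. f x \<partial>N) - (\<integral>x. f x \<partial>\<mu>s)\<bar> \<le> d_FM N \<mu>s"
  unfolding d_FM_def
proof (rule cSup_upper)
  show "bdd_above {\<bar>(\<integral>x. f x \<partial>N) - (\<integral>x. f x \<partial>\<mu>s)\<bar> | f. BL_le1 f \<and> f \<in> borel_measurable borel}"
  proof (rule bdd_aboveI, clarify)
    fix h :: "'a \<Rightarrow> real" assume "BL_le1 h"
    then have "\<bar>\<integral>x. h x \<partial>N\<bar> \<le> 1" "\<bar>\<integral>x. h x \<partial>\<mu>s\<bar> \<le> 1"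
      using prob_space.abs_integral_le_const assms(1,2) unfolding BL_le1_def by blast+
    then show "\<bar>(\<integral>x. h x \<partial>N) - (\<integral>x. h x \<partial>\<mu>s)\<bar> \<le> 2" by linarith
  qed
qed (use assms in blast)

lemma abs_integral_centred_le_d_FM:
  fixes N \<mu>s :: "'a::metric_space measure" and g :: "'a \<Rightarrow> real"
  assumes N: "prob_space N" "sets N = sets borel" and \<mu>s: "prob_space \<mu>s"
    and L: "L-lipschitz_on UNIV g" and M: "\<And>x. \<bar>g x\<bar> \<le> M"
  shows "\<bar>\<integral>y. centred \<mu>s g y \<partial>N\<bar> \<le> max 1 (max L M) * d_FM N \<mu>s"
proof -
  define K where "K = max 1 (max L M)"
  have "K > 0" "L \<le> K" "M \<le> K" unfolding K_def by auto
  have g_meas [measurable]: "g \<in> borel_measurable borel"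
    using L by (intro borel_measurable_continuous_onI lipschitz_on_continuous_on)
  have "BL_le1 (\<lambda>y. g y / K)"
    unfolding BL_le1_def
  proof (intro conjI allI)
    fix x y
    show "\<bar>g x / K\<bar> \<le> 1" using M[of x] \<open>M \<le> K\<close> \<open>K > 0\<close> by (simp add: abs_divide)
    have "\<bar>g x - g y\<bar> \<le> L * dist x y" using lipschitz_onD[OF L] by (simp add: dist_real_def)
    also have "\<dots> \<le> K * dist x y" using \<open>L \<le> K\<close> by (intro mult_right_mono) auto
    finally show "\<bar>g x / K - g y / K\<bar> \<le> dist x y"
      using \<open>K > 0\<close> by (simp add: diff_divide_distrib[symmetric] abs_divide pos_divide_le_eq mult.commute)
  qed
  then have "\<bar>(\<integral>y. g y / K \<partial>N) - (\<integral>y. g y / K \<partial>\<mu>s)\<bar> \<le> d_FM N \<mu>s"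
    using N(1) \<mu>s by (intro abs_integral_diff_le_d_FM) auto
  moreover have "integrable N g"
    using N M by (intro finite_measure.integrable_const_bound[where B=M])
      (auto simp: prob_space_def measurable_cong_sets[OF N(2) refl])
  then have "(\<integral>y. centred \<mu>s g y \<partial>N) = K * ((\<integral>y. g y / K \<partial>N) - (\<integral>y. g y / K \<partial>\<mu>s))"
    using N(1) \<open>K > 0\<close> unfolding centred_def
    by (subst Bochner_Integration.integral_diff)
      (auto simp: prob_space.prob_space prob_space_def finite_measure.integrable_const right_diff_distrib)
  ultimately show ?thesis
    using \<open>K > 0\<close> by (simp add: abs_mult K_def)
qed

lemma d_FM_kernel_le_of_exp_convergence:
  fixes P :: "real \<Rightarrow> 'a::metric_space \<Rightarrow> 'a measure" and V :: "'a \<Rightarrow> real"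
  assumes conv: "\<exists>C :: 'a measure \<Rightarrow> real.
        (\<forall>\<nu>. prob_borel \<nu> \<and> (\<integral>\<^sup>+ x. ennreal (V x) \<partial>\<nu>) < \<infinity> \<longrightarrow>
           C \<nu> \<ge> 0 \<and> (\<forall>t\<ge>0. d_FM (\<nu> \<bind> P t) \<mu>s \<le> C \<nu> * exp (- \<gamma> * t))) \<and>
        (\<forall>x. C (return borel x) = \<kappa> * sqrt (V x + 1))"
    and P: "P t \<in> borel \<rightarrow>\<^sub>M prob_algebra borel" and "t \<ge> 0"
    and [measurable]: "V \<in> borel_measurable borel"
  shows "d_FM (P t x) \<mu>s \<le> \<kappa> * sqrt (V x + 1) * exp (- \<gamma> * t)"
proof -
  have "prob_borel (return borel x)" by (simp add: prob_borel_def prob_space_return)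
  moreover have "(\<integral>\<^sup>+ y. ennreal (V y) \<partial>return borel x) < \<infinity>" by (simp add: nn_integral_return)
  moreover have "return borel x \<bind> P t = P t x"
    using measurable_prob_algebraD[OF P] by (simp add: bind_return)
  ultimately show ?thesis using conv \<open>t \<ge> 0\<close> by metis
qed

lemma abs_chi_le:
  fixes P :: "real \<Rightarrow> 'a::metric_space \<Rightarrow> 'a measure" and g :: "'a \<Rightarrow> real"
  assumes P: "\<And>t. t \<ge> 0 \<Longrightarrow> P t \<in> borel \<rightarrow>\<^sub>M prob_algebra borel" and \<mu>s: "prob_space \<mu>s"
    and L: "L-lipschitz_on UNIV g" and M: "\<And>x. \<bar>g x\<bar> \<le> M"
    and d_FM_le: "\<And>t. t \<ge> 0 \<Longrightarrow> d_FM (P t x) \<mu>s \<le> \<delta> * exp (- \<gamma> * t)"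
    and "\<gamma> > 0" "\<delta> \<ge> 0"
  shows "\<bar>chi P \<mu>s g x\<bar> \<le> max 1 (max L M) * \<delta> / \<gamma>"
  unfolding chi_def Pf_def
proof (rule abs_set_integral_exp_decay_le)
  fix t :: real assume "t \<ge> 0"
  have "\<bar>\<integral>y. centred \<mu>s g y \<partial>P t x\<bar> \<le> max 1 (max L M) * d_FM (P t x) \<mu>s"
    using prob_algebra_kernelD[OF P[OF \<open>t \<ge> 0\<close>]] \<mu>s L M by (intro abs_integral_centred_le_d_FM) auto
  also have "\<dots> \<le> max 1 (max L M) * (\<delta> * exp (- \<gamma> * t))"
    using d_FM_le[OF \<open>t \<ge> 0\<close>] by (intro mult_left_mono) auto
  finally show "\<bar>\<integral>y. centred \<mu>s g y \<partial>P t x\<bar> \<le> max 1 (max L M) * \<delta> * exp (- \<gamma> * t)"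
    by (simp add: mult.assoc)
qed (use assms in auto)

lemma abs_centred_le:
  assumes "prob_space \<mu>s" "\<And>x. \<bar>g x\<bar> \<le> M"
  shows "\<bar>centred \<mu>s g y\<bar> \<le> 2 * M"
  using prob_space.abs_integral_le_const[where f=g, OF assms] assms(2)[of y] unfolding centred_def by linarith

lemma abs_Zinc_le:
  assumes chi: "\<And>y. \<bar>chi P \<mu>s g y\<bar> \<le> c * w y" and centred: "\<And>y. \<bar>centred \<mu>s g y\<bar> \<le> m"
    and w: "\<And>y. 1 \<le> w y"
  shows "\<bar>Zinc P \<mu>s g X i \<omega>\<bar> \<le> (c + m) * (w (X (real i) \<omega>) + w (X (real i - 1) \<omega>))"
proof -
  have "0 \<le> m" using centred order_trans abs_ge_zero by blast
  then have "m \<le> m * (w (X (real i) \<omega>) + w (X (real i - 1) \<omega>))"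
    using w[of "X (real i) \<omega>"] w[of "X (real i - 1) \<omega>"] by (simp add: mult_le_cancel_left1)
  moreover have "\<bar>LINT s:{real i - 1..real i}|lborel. centred \<mu>s g (X s \<omega>)\<bar> \<le> m"
    using abs_set_integral_Icc_le[of "\<lambda>s. centred \<mu>s g (X s \<omega>)" m "real i - 1" "real i"] centred
    by simp
  ultimately show ?thesis
    unfolding Zinc_def using chi[of "X (real i) \<omega>"] chi[of "X (real i - 1) \<omega>"]
    by (simp add: algebra_simps)
qed

lemma abs_Zinc_le_sqrt:
  fixes P :: "real \<Rightarrow> 'a::metric_space \<Rightarrow> 'a measure" and V g :: "'a \<Rightarrow> real"
  assumes P: "\<And>t. t \<ge> 0 \<Longrightarrow> P t \<in> borel \<rightarrow>\<^sub>M prob_algebra borel" and \<mu>s: "prob_space \<mu>s"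
    and L: "L-lipschitz_on UNIV g" and M: "\<And>x. \<bar>g x\<bar> \<le> M" and V: "\<And>x. V x \<ge> 0"
    and d_FM_le: "\<And>x t. t \<ge> 0 \<Longrightarrow> d_FM (P t x) \<mu>s \<le> \<kappa> * sqrt (V x + 1) * exp (- \<gamma> * t)"
    and "\<gamma> > 0" "\<kappa> \<ge> 0"
  shows "\<bar>Zinc P \<mu>s g X i \<omega>\<bar> \<le> (max 1 (max L M) * \<kappa> / \<gamma> + 2 * M) *
    (sqrt (V (X (real i) \<omega>) + 1) + sqrt (V (X (real i - 1) \<omega>) + 1))"
proof (rule abs_Zinc_le)
  show "\<bar>chi P \<mu>s g y\<bar> \<le> max 1 (max L M) * \<kappa> / \<gamma> * sqrt (V y + 1)" for y
    using abs_chi_le[OF P \<mu>s L M d_FM_le \<open>\<gamma> > 0\<close>] \<open>\<kappa> \<ge> 0\<close> V by (simp add: mult.assoc)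
qed (use abs_centred_le[where g=g, OF \<mu>s M] V in auto)

lemma markov_family_kernel:
  "markov_family S Mx X P \<Longrightarrow> t \<ge> 0 \<Longrightarrow> P t \<in> borel \<rightarrow>\<^sub>M prob_algebra borel"
  unfolding markov_family_def by blast

lemma markov_family_prob_space:
  assumes "markov_family S Mx X P"
  shows "prob_space (Mx x)" "sets (Mx x) = sets S"
  using assms prob_algebra_kernelD[of Mx borel S] unfolding markov_family_def by auto

lemma markov_family_measurable:
  assumes markov: "markov_family S Mx X P" and "t \<ge> 0"
  shows "X t \<in> borel_measurable (Mx x)"
proof -
  have "(\<lambda>(t, \<omega>). X t \<omega>) \<in> restrict_space borel {0..} \<Otimes>\<^sub>M S \<rightarrow>\<^sub>M borel"
    using markov unfolding markov_family_def by blast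
  moreover have "t \<in> space (restrict_space borel {0..})" using \<open>t \<ge> 0\<close> by simp
  ultimately have "X t \<in> borel_measurable S" using measurable_Pair1' measurable_compose by fastforce
  then show ?thesis using measurable_cong_sets[OF markov_family_prob_space(2)[OF markov] refl] by blast
qed

lemma markov_family_integral_eq_Pf:
  assumes markov: "markov_family S Mx X P" and "t \<ge> 0"
    and f: "f \<in> borel_measurable borel" "bounded (range f)"
  shows "(\<integral>\<omega>. f (X t \<omega>) \<partial>Mx x) = Pf P t f x"
proof -
  have space_Mx: "space (Mx x) = space S"
    using sets_eq_imp_space_eq[OF markov_family_prob_space(2)[OF markov]] .
  have "space (nat_filtration S X 0) = space S"
    unfolding nat_filtration_def by (rule space_measure_of_conv)
  then have "space S \<in> sets (nat_filtration S X 0)" by (metis sets.top)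
  then have "(\<integral>\<omega>. indicator (space S) \<omega> * f (X (0 + t) \<omega>) \<partial>Mx x) =
      (\<integral>\<omega>. indicator (space S) \<omega> * Pf P t f (X 0 \<omega>) \<partial>Mx x)"
    using markov \<open>t \<ge> 0\<close> f unfolding markov_family_def by blast
  moreover have "(\<integral>\<omega>. indicator (space S) \<omega> * f (X (0 + t) \<omega>) \<partial>Mx x) = (\<integral>\<omega>. f (X t \<omega>) \<partial>Mx x)"
    using space_Mx by (intro Bochner_Integration.integral_cong) auto
  moreover have "(\<integral>\<omega>. indicator (space S) \<omega> * Pf P t f (X 0 \<omega>) \<partial>Mx x) = (\<integral>\<omega>. Pf P t f x \<partial>Mx x)"
  proof (rule integral_cong_AE)
    have [measurable]: "Pf P t f \<in> borel_measurable borel"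
      using measurable_prob_algebraD[OF markov_family_kernel[OF markov \<open>t \<ge> 0\<close>]] f(1)
      unfolding Pf_def by measurable
    have [measurable]: "space S \<in> sets (Mx x)" "X 0 \<in> borel_measurable (Mx x)"
      using markov_family_prob_space(2)[OF markov] markov_family_measurable[OF markov] by auto
    show "(\<lambda>\<omega>. indicator (space S) \<omega> * Pf P t f (X 0 \<omega>)) \<in> borel_measurable (Mx x)"
      by measurable
    have "AE \<omega> in Mx x. X 0 \<omega> = x" using markov unfolding markov_family_def by blast
    with AE_space show "AE \<omega> in Mx x. indicator (space S) \<omega> * Pf P t f (X 0 \<omega>) = Pf P t f x"
      by eventually_elim (simp add: space_Mx)
  qed simp
  ultimately show ?thesis using prob_space.prob_space[OF markov_family_prob_space(1)[OF markov]] by simp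
qed

lemma markov_family_distr_eq_kernel:
  assumes markov: "markov_family S Mx X P" and "t \<ge> 0"
  shows "distr (Mx x) borel (X t) = P t x"
proof (rule measure_eqI)
  note X_meas = markov_family_measurable[OF markov \<open>t \<ge> 0\<close>]
  have Pt: "prob_space (P t x)" "sets (P t x) = sets borel"
    using prob_algebra_kernelD[OF markov_family_kernel[OF markov \<open>t \<ge> 0\<close>]] by auto
  then show "sets (distr (Mx x) borel (X t)) = sets (P t x)" by simp
  fix A assume "A \<in> sets (distr (Mx x) borel (X t))"
  then have A: "A \<in> sets borel" by simp
  have "measure (distr (Mx x) borel (X t)) A = (\<integral>\<omega>. indicator A (X t \<omega>) \<partial>Mx x)"
    using integral_distr[OF X_meas, of "indicator A :: _ \<Rightarrow> real"] A by simp
  also have "\<dots> = Pf P t (indicator A) x"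
    using A by (intro markov_family_integral_eq_Pf[OF markov \<open>t \<ge> 0\<close>])
      (auto simp: bounded_iff intro!: exI[of _ 1])
  also have "\<dots> = measure (P t x) A"
    using Pt by (simp add: Pf_def sets_eq_imp_space_eq)
  finally show "emeasure (distr (Mx x) borel (X t)) A = emeasure (P t x) A"
    using prob_space.prob_space_distr[OF markov_family_prob_space(1)[OF markov] X_meas] Pt(1)
    by (simp add: prob_space_def finite_measure.emeasure_eq_measure)
qed

lemma markov_family_nn_integral_eq_kernel:
  assumes markov: "markov_family S Mx X P" and "t \<ge> 0" and "f \<in> borel_measurable borel"
  shows "(\<integral>\<^sup>+\<omega>. f (X t \<omega>) \<partial>Mx x) = (\<integral>\<^sup>+y. f y \<partial>P t x)"
proof -
  have "(\<integral>\<^sup>+\<omega>. f (X t \<omega>) \<partial>Mx x) = (\<integral>\<^sup>+y. f y \<partial>distr (Mx x) borel (X t))"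
    using markov_family_measurable[OF markov \<open>t \<ge> 0\<close>] assms(3) by (simp add: nn_integral_distr)
  then show ?thesis by (simp add: markov_family_distr_eq_kernel[OF markov \<open>t \<ge> 0\<close>])
qed

lemma nn_integral_bind_le_lyapunov:
  assumes \<nu>: "prob_borel \<nu>" and K: "K \<in> borel \<rightarrow>\<^sub>M prob_algebra borel"
    and W [measurable]: "W \<in> borel_measurable borel" "\<And>x. W x \<ge> 0"
    and lyap: "\<And>x. (\<integral>\<^sup>+y. ennreal (W y) \<partial>K x) \<le> ennreal (a * W x + b)"
    and "a \<ge> 0" "b \<ge> 0"
  shows "(\<integral>\<^sup>+y. ennreal (W y) \<partial>(\<nu> \<bind> K)) \<le> ennreal a * (\<integral>\<^sup>+x. ennreal (W x) \<partial>\<nu>) + ennreal b"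
proof -
  have \<nu>': "prob_space \<nu>" "sets \<nu> = sets borel" using \<nu> by (auto simp: prob_borel_def)
  have "(\<integral>\<^sup>+y. ennreal (W y) \<partial>(\<nu> \<bind> K)) = (\<integral>\<^sup>+x. \<integral>\<^sup>+y. ennreal (W y) \<partial>K x \<partial>\<nu>)"
    using measurable_prob_algebraD[OF K] measurable_cong_sets[OF \<nu>'(2) refl]
    by (intro nn_integral_bind) auto
  also have "\<dots> \<le> (\<integral>\<^sup>+x. ennreal a * ennreal (W x) + ennreal b \<partial>\<nu>)"
    using lyap W(2) \<open>a \<ge> 0\<close> \<open>b \<ge> 0\<close> by (intro nn_integral_mono) (simp add: ennreal_mult)
  also have "\<dots> = ennreal a * (\<integral>\<^sup>+x. ennreal (W x) \<partial>\<nu>) + ennreal b"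
    using prob_space.emeasure_space_1[OF \<nu>'(1)]
    by (subst nn_integral_add) (auto simp: measurable_cong_sets[OF \<nu>'(2) refl] nn_integral_cmult)
  finally show ?thesis .
qed

lemma invariant_nn_integral_le:
  assumes inv: "invariant P \<mu>s" and P: "P t \<in> borel \<rightarrow>\<^sub>M prob_algebra borel" "t \<ge> 0"
    and [measurable]: "f \<in> borel_measurable borel"
    and le: "\<And>y. (\<integral>\<^sup>+x. f x \<partial>P t y) \<le> u y"
  shows "(\<integral>\<^sup>+x. f x \<partial>\<mu>s) \<le> (\<integral>\<^sup>+y. u y \<partial>\<mu>s)"
proof -
  have "sets \<mu>s = sets borel" using inv by (simp add: invariant_def prob_borel_def)
  have "(\<integral>\<^sup>+x. f x \<partial>\<mu>s) = (\<integral>\<^sup>+x. f x \<partial>(\<mu>s \<bind> P t))"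
    using inv \<open>t \<ge> 0\<close> by (simp add: invariant_def)
  also have "\<dots> = (\<integral>\<^sup>+y. \<integral>\<^sup>+x. f x \<partial>P t y \<partial>\<mu>s)"
  proof (rule nn_integral_bind)
    show "P t \<in> \<mu>s \<rightarrow>\<^sub>M subprob_algebra borel"
      using measurable_prob_algebraD[OF P(1)] measurable_cong_sets[OF \<open>sets \<mu>s = sets borel\<close> refl]
      by auto
  qed measurable
  also have "\<dots> \<le> (\<integral>\<^sup>+y. u y \<partial>\<mu>s)" by (intro nn_integral_mono le)
  finally show ?thesis .
qed

lemma INF_nn_integral_min_exp_decay_le:
  assumes "prob_space M" and W: "W \<in> borel_measurable M" "\<And>x. W x \<ge> 0" and "A \<ge> 0" "\<Gamma> > 0"
  shows "(INF n. \<integral>\<^sup>+y. min (ennreal c) (ennreal (A * exp (- \<Gamma> * real n) * W y + B)) \<partial>M) \<le> ennreal B"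
proof -
  define f where "f n y = min (ennreal c) (ennreal (A * exp (- \<Gamma> * real n) * W y + B))" for n y
  have "(INF n. integral\<^sup>N M (f n)) = (\<integral>\<^sup>+y. (INF n. f n y) \<partial>M)"
  proof (rule nn_integral_monotone_convergence_INF_decseq[symmetric])
    show "decseq f"
      using \<open>A \<ge> 0\<close> \<open>\<Gamma> > 0\<close> W(2) unfolding f_def
      by (intro decseq_SucI le_funI min.mono ennreal_leI add_right_mono mult_right_mono mult_left_mono)
        auto
    show "f n \<in> borel_measurable M" for n unfolding f_def using W(1) by measurable
    have "integral\<^sup>N M (f 0) \<le> (\<integral>\<^sup>+y. ennreal c \<partial>M)"
      unfolding f_def by (intro nn_integral_mono) simp
    then show "integral\<^sup>N M (f 0) < \<infinity>"
      using prob_space.emeasure_space_1[OF \<open>prob_space M\<close>] by (simp add: top.not_eq_extremum le_less_trans)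
  qed
  also have "\<dots> \<le> (\<integral>\<^sup>+y. ennreal B \<partial>M)"
  proof (intro nn_integral_mono)
    fix y
    have "exp (- \<Gamma> * real n) = exp (- \<Gamma>) ^ n" for n
      by (simp add: exp_of_nat_mult[symmetric] mult.commute)
    moreover have "(\<lambda>n. exp (- \<Gamma>) ^ n) \<longlonglongrightarrow> 0" using \<open>\<Gamma> > 0\<close> by (intro LIMSEQ_power_zero) simp
    ultimately have "(\<lambda>n. exp (- \<Gamma> * real n)) \<longlonglongrightarrow> 0" by simp
    then have "(\<lambda>n. A * exp (- \<Gamma> * real n) * W y + B) \<longlonglongrightarrow> A * 0 * W y + B"
      by (intro tendsto_intros)
    then have "(\<lambda>n. ennreal (A * exp (- \<Gamma> * real n) * W y + B)) \<longlonglongrightarrow> ennreal B"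
      by (intro tendsto_ennrealI) simp
    moreover have "(INF n. f n y) \<le> ennreal (A * exp (- \<Gamma> * real n) * W y + B)" for n
      using INF_lower[of n UNIV "\<lambda>n. f n y"] unfolding f_def by (simp add: le_infI2 min_def split: if_splits)
    ultimately show "(INF n. f n y) \<le> ennreal B"
      by (intro LIMSEQ_le_const) auto
  qed
  also have "\<dots> = ennreal B" using prob_space.emeasure_space_1[OF \<open>prob_space M\<close>] by simp
  finally show ?thesis unfolding f_def .
qed

lemma invariant_nn_integral_le_lyapunov:
  assumes inv: "invariant P \<mu>s" and P: "\<And>t. t \<ge> 0 \<Longrightarrow> P t \<in> borel \<rightarrow>\<^sub>M prob_algebra borel"
    and W [measurable]: "W \<in> borel_measurable borel" "\<And>x. W x \<ge> 0"
    and lyap: "\<And>x t. t \<ge> 0 \<Longrightarrow>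
        (\<integral>\<^sup>+y. ennreal (W y) \<partial>P t x) \<le> ennreal (A * exp (- \<Gamma> * t) * W x + B)"
    and "A \<ge> 0" "\<Gamma> > 0"
  shows "(\<integral>\<^sup>+x. ennreal (W x) \<partial>\<mu>s) \<le> ennreal B"
proof -
  have \<mu>s: "prob_space \<mu>s" "sets \<mu>s = sets borel" using inv by (auto simp: invariant_def prob_borel_def)
  then have W_meas: "W \<in> borel_measurable \<mu>s" using W(1) measurable_cong_sets by blast
  \<comment> \<open>Truncate: the W-moment of \<open>\<mu>s\<close> is not known to be finite a priori.\<close>
  show ?thesis
  proof (rule nn_integral_le_of_truncations_le[OF W_meas])
    fix N :: nat
    have "(\<integral>\<^sup>+x. ennreal (min (W x) (real N)) \<partial>\<mu>s) \<le>
        (\<integral>\<^sup>+y. min (ennreal (real N)) (ennreal (A * exp (- \<Gamma> * real n) * W y + B)) \<partial>\<mu>s)" for n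
    proof (rule invariant_nn_integral_le[OF inv P])
      fix y
      have "prob_space (P (real n) y)" using prob_algebra_kernelD[OF P] by simp
      then have "(\<integral>\<^sup>+x. ennreal (min (W x) (real N)) \<partial>P (real n) y) \<le> ennreal (real N)"
        using nn_integral_mono[of "P (real n) y" "\<lambda>x. ennreal (min (W x) (real N))" "\<lambda>_. ennreal (real N)"]
        by (simp add: prob_space.emeasure_space_1)
      moreover have "(\<integral>\<^sup>+x. ennreal (min (W x) (real N)) \<partial>P (real n) y) \<le> (\<integral>\<^sup>+x. ennreal (W x) \<partial>P (real n) y)"
        by (intro nn_integral_mono ennreal_leI) simp
      ultimately show "(\<integral>\<^sup>+x. ennreal (min (W x) (real N)) \<partial>P (real n) y) \<le>
          min (ennreal (real N)) (ennreal (A * exp (- \<Gamma> * real n) * W y + B))"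
        using lyap[of "real n" y] by simp
    qed auto
    then have "(\<integral>\<^sup>+x. ennreal (min (W x) (real N)) \<partial>\<mu>s) \<le>
        (INF n. \<integral>\<^sup>+y. min (ennreal (real N)) (ennreal (A * exp (- \<Gamma> * real n) * W y + B)) \<partial>\<mu>s)"
      by (intro INF_greatest)
    also have "\<dots> \<le> ennreal B"
      using \<mu>s(1) W_meas W(2) \<open>A \<ge> 0\<close> \<open>\<Gamma> > 0\<close> by (rule INF_nn_integral_min_exp_decay_le)
    finally show "(\<integral>\<^sup>+x. ennreal (min (W x) (real N)) \<partial>\<mu>s) \<le> ennreal B" .
  qed
qed

lemma markov_family_nn_integral_two_times_le:
  assumes markov: "markov_family S Mx X P"
    and W [measurable]: "W \<in> borel_measurable borel" "\<And>x. W x \<ge> 0"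
    and lyap: "\<And>x t. t \<ge> 0 \<Longrightarrow>
        (\<integral>\<^sup>+y. ennreal (W y) \<partial>P t x) \<le> ennreal (A * exp (- \<Gamma> * t) * W x + B)"
    and "A \<ge> 0" "B \<ge> 0" "c0 \<ge> 0" "c1 \<ge> 0" "s \<ge> 1"
    and F: "\<And>\<omega>. F \<omega> \<le> c0 + c1 * (W (X s \<omega>) + W (X (s - 1) \<omega>))"
  shows "(\<integral>\<^sup>+\<omega>. ennreal (F \<omega>) \<partial>Mx x) \<le>
    ennreal ((c0 + 2 * c1 * B) + c1 * A * (1 + exp \<Gamma>) * exp (- \<Gamma> * s) * W x)"
proof -
  have moment: "(\<integral>\<^sup>+\<omega>. ennreal (W (X r \<omega>)) \<partial>Mx x) \<le> ennreal (A * exp (- \<Gamma> * r) * W x + B)"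
    if "r \<ge> 0" for r
    using markov_family_nn_integral_eq_kernel[OF markov that, of "\<lambda>y. ennreal (W y)"] lyap[OF that]
    by simp
  have [measurable]: "X s \<in> borel_measurable (Mx x)" "X (s - 1) \<in> borel_measurable (Mx x)"
    using markov_family_measurable[OF markov] \<open>s \<ge> 1\<close> by auto
  have "ennreal (F \<omega>) \<le> ennreal c0 + ennreal c1 * ennreal (W (X s \<omega>)) + ennreal c1 * ennreal (W (X (s - 1) \<omega>))"
    for \<omega>
  proof -
    have "ennreal (F \<omega>) \<le> ennreal (c0 + c1 * W (X s \<omega>) + c1 * W (X (s - 1) \<omega>))"
      using F[of \<omega>] by (intro ennreal_leI) (simp add: distrib_left add.assoc)
    also have "\<dots> = ennreal c0 + ennreal c1 * ennreal (W (X s \<omega>)) + ennreal c1 * ennreal (W (X (s - 1) \<omega>))"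
      using W(2) \<open>c0 \<ge> 0\<close> \<open>c1 \<ge> 0\<close> by (simp add: ennreal_mult)
    finally show ?thesis .
  qed
  then have "(\<integral>\<^sup>+\<omega>. ennreal (F \<omega>) \<partial>Mx x) \<le>
      (\<integral>\<^sup>+\<omega>. ennreal c0 + ennreal c1 * ennreal (W (X s \<omega>)) + ennreal c1 * ennreal (W (X (s - 1) \<omega>)) \<partial>Mx x)"
    by (intro nn_integral_mono)
  also have "\<dots> = ennreal c0 + ennreal c1 * (\<integral>\<^sup>+\<omega>. ennreal (W (X s \<omega>)) \<partial>Mx x) +
      ennreal c1 * (\<integral>\<^sup>+\<omega>. ennreal (W (X (s - 1) \<omega>)) \<partial>Mx x)"
    using prob_space.emeasure_space_1[OF markov_family_prob_space(1)[OF markov]]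
    by (simp add: nn_integral_add nn_integral_cmult)
  also have "\<dots> \<le> ennreal c0 + ennreal c1 * ennreal (A * exp (- \<Gamma> * s) * W x + B) +
      ennreal c1 * ennreal (A * exp (- \<Gamma> * (s - 1)) * W x + B)"
    using moment \<open>s \<ge> 1\<close> by (intro add_mono mult_left_mono order.refl) auto
  also have "\<dots> = ennreal (c0 + c1 * (A * exp (- \<Gamma> * s) * W x + B) + c1 * (A * exp (- \<Gamma> * (s - 1)) * W x + B))"
    using W(2) \<open>A \<ge> 0\<close> \<open>B \<ge> 0\<close> \<open>c0 \<ge> 0\<close> \<open>c1 \<ge> 0\<close> by (simp add: ennreal_mult)
  also have "\<dots> = ennreal ((c0 + 2 * c1 * B) + c1 * A * (1 + exp \<Gamma>) * exp (- \<Gamma> * s) * W x)"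
  proof -
    have "exp (- \<Gamma> * (s - 1)) = exp \<Gamma> * exp (- \<Gamma> * s)"
      by (simp add: exp_add[symmetric] algebra_simps)
    then show ?thesis by (simp add: algebra_simps)
  qed
  finally show ?thesis .
qed

lemma nn_integral_bind_kernel_le_exp_decay:
  assumes \<nu>: "prob_borel \<nu>" "(\<integral>\<^sup>+x. ennreal (W x) \<partial>\<nu>) = ennreal M" "M \<ge> 0"
    and P: "P t \<in> borel \<rightarrow>\<^sub>M prob_algebra borel" "t \<ge> 0"
    and W [measurable]: "W \<in> borel_measurable borel" "\<And>x. W x \<ge> 0"
    and lyap: "\<And>x. (\<integral>\<^sup>+y. ennreal (W y) \<partial>P t x) \<le> ennreal (A * exp (- \<Gamma> * t) * W x + B)"
    and G: "\<And>x. G x \<le> ennreal (\<alpha> + \<beta> * exp (- \<Gamma> * s) * W x)"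
    and "A \<ge> 0" "B \<ge> 0" "\<alpha> \<ge> 0" "\<beta> \<ge> 0" "\<Gamma> > 0" "s \<ge> 0"
  shows "(\<integral>\<^sup>+x. G x \<partial>(\<nu> \<bind> P t)) \<le> ennreal (\<beta> * A * M * exp (- \<Gamma> * (s + t)) + (\<alpha> + \<beta> * B))"
proof -
  have \<nu>_space: "\<nu> \<in> space (prob_algebra borel)"
    using \<nu>(1) by (simp add: prob_borel_def space_prob_algebra)
  have "sets (\<nu> \<bind> P t) = sets borel" by (rule sets_bind'[OF \<nu>_space P(1)])
  then have [measurable]: "W \<in> borel_measurable (\<nu> \<bind> P t)"
    using measurable_cong_sets by (metis W(1))
  have "(\<integral>\<^sup>+x. G x \<partial>(\<nu> \<bind> P t)) \<le>
      (\<integral>\<^sup>+x. ennreal \<alpha> + ennreal (\<beta> * exp (- \<Gamma> * s)) * ennreal (W x) \<partial>(\<nu> \<bind> P t))"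
    using G W(2) \<open>\<alpha> \<ge> 0\<close> \<open>\<beta> \<ge> 0\<close> by (intro nn_integral_mono) (simp add: ennreal_mult)
  also have "\<dots> = ennreal \<alpha> + ennreal (\<beta> * exp (- \<Gamma> * s)) * (\<integral>\<^sup>+x. ennreal (W x) \<partial>(\<nu> \<bind> P t))"
    using prob_space.emeasure_space_1[OF prob_space_bind'[OF \<nu>_space P(1)]]
    by (simp add: nn_integral_add nn_integral_cmult)
  also have "\<dots> \<le> ennreal \<alpha> + ennreal (\<beta> * exp (- \<Gamma> * s)) * (ennreal (A * exp (- \<Gamma> * t)) * ennreal M + ennreal B)"
    using nn_integral_bind_le_lyapunov[OF \<nu>(1) P(1) W lyap] \<nu>(2) \<open>A \<ge> 0\<close> \<open>B \<ge> 0\<close>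
    by (intro add_mono mult_left_mono order.refl) auto
  also have "\<dots> = ennreal (\<alpha> + \<beta> * exp (- \<Gamma> * s) * (A * exp (- \<Gamma> * t) * M + B))"
    using \<open>M \<ge> 0\<close> \<open>A \<ge> 0\<close> \<open>B \<ge> 0\<close> \<open>\<alpha> \<ge> 0\<close> \<open>\<beta> \<ge> 0\<close> by (simp add: ennreal_mult)
  also have "\<dots> \<le> ennreal (\<beta> * A * M * exp (- \<Gamma> * (s + t)) + (\<alpha> + \<beta> * B))"
  proof (rule ennreal_leI)
    have "\<beta> * B * exp (- \<Gamma> * s) \<le> \<beta> * B"
      using \<open>B \<ge> 0\<close> \<open>\<beta> \<ge> 0\<close> \<open>\<Gamma> > 0\<close> \<open>s \<ge> 0\<close> by (simp add: mult_left_le)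
    moreover have "exp (- \<Gamma> * s) * exp (- \<Gamma> * t) = exp (- \<Gamma> * (s + t))"
      by (simp add: exp_add[symmetric] algebra_simps)
    ultimately show "\<alpha> + \<beta> * exp (- \<Gamma> * s) * (A * exp (- \<Gamma> * t) * M + B) \<le>
        \<beta> * A * M * exp (- \<Gamma> * (s + t)) + (\<alpha> + \<beta> * B)"
      by (simp add: algebra_simps)
  qed
  finally show ?thesis .
qed

lemma lyapunov_moment_bounds:
  fixes G :: "nat \<Rightarrow> 'a::topological_space \<Rightarrow> ennreal"
  assumes P: "\<And>t. t \<ge> 0 \<Longrightarrow> P t \<in> borel \<rightarrow>\<^sub>M prob_algebra borel" and inv: "invariant P \<mu>s"
    and W [measurable]: "W \<in> borel_measurable borel" "\<And>x. W x \<ge> 0"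
    and lyap: "\<And>x t. t \<ge> 0 \<Longrightarrow>
        (\<integral>\<^sup>+y. ennreal (W y) \<partial>P t x) \<le> ennreal (A * exp (- \<Gamma> * t) * W x + B)"
    and "A \<ge> 0" "B \<ge> 0" "\<Gamma> > 0"
    and \<mu>: "prob_borel \<mu>" "(\<integral>\<^sup>+x. ennreal (W x) \<partial>\<mu>) < \<infinity>"
    and G: "\<And>i x. i \<ge> 1 \<Longrightarrow> G i x \<le> ennreal (\<alpha> + \<beta> * exp (- \<Gamma> * real i) * W x)"
    and "\<alpha> \<ge> 0" "\<beta> \<ge> 0"
  shows "\<exists>At Bt \<Gamma>p. At \<ge> 0 \<and> Bt \<ge> 0 \<and> \<Gamma>p > 0 \<and>
    (\<forall>i t. i \<ge> 1 \<longrightarrow> t \<ge> 0 \<longrightarrow>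
       (\<integral>\<^sup>+x. G i x \<partial>(\<mu> \<bind> P t)) \<le> ennreal (At * exp (- \<Gamma>p * (real i + t)) + Bt)) \<and>
    (SUP i\<in>{1..}. \<integral>\<^sup>+x. G i x \<partial>\<mu>s) < \<infinity>"
proof -
  have bound: "(\<integral>\<^sup>+x. G i x \<partial>(\<nu> \<bind> P t)) \<le> ennreal (\<beta> * A * M * exp (- \<Gamma> * (real i + t)) + (\<alpha> + \<beta> * B))"
    if "prob_borel \<nu>" "(\<integral>\<^sup>+x. ennreal (W x) \<partial>\<nu>) = ennreal M" "M \<ge> 0" "i \<ge> 1" "t \<ge> 0" for \<nu> M i t
    by (rule nn_integral_bind_kernel_le_exp_decay[where G="G i" and W=W and s="real i" and P=P and t=t])
      (use assms that in auto)
  obtain M where M: "(\<integral>\<^sup>+x. ennreal (W x) \<partial>\<mu>) = ennreal M" "M \<ge> 0"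
    using \<mu>(2) by (cases "\<integral>\<^sup>+x. ennreal (W x) \<partial>\<mu>") auto
  obtain Ms where Ms: "(\<integral>\<^sup>+x. ennreal (W x) \<partial>\<mu>s) = ennreal Ms" "Ms \<ge> 0"
    using invariant_nn_integral_le_lyapunov[OF inv P W lyap \<open>A \<ge> 0\<close> \<open>\<Gamma> > 0\<close>]
    by (cases "\<integral>\<^sup>+x. ennreal (W x) \<partial>\<mu>s") (auto simp: top_unique)
  have "(\<integral>\<^sup>+x. G i x \<partial>\<mu>s) \<le> ennreal (\<beta> * A * Ms + (\<alpha> + \<beta> * B))" if "i \<ge> 1" for i
  proof -
    have "\<mu>s \<bind> P 0 = \<mu>s" "prob_borel \<mu>s" using inv by (auto simp: invariant_def)
    then have "(\<integral>\<^sup>+x. G i x \<partial>\<mu>s) \<le> ennreal (\<beta> * A * Ms * exp (- \<Gamma> * real i) + (\<alpha> + \<beta> * B))"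
      using bound[of \<mu>s Ms i 0] Ms that by simp
    also have "\<dots> \<le> ennreal (\<beta> * A * Ms + (\<alpha> + \<beta> * B))"
      using \<open>A \<ge> 0\<close> \<open>\<Gamma> > 0\<close> \<open>\<beta> \<ge> 0\<close> Ms(2) by (intro ennreal_leI) (simp add: mult_left_le)
    finally show ?thesis .
  qed
  then have "(SUP i\<in>{1..}. \<integral>\<^sup>+x. G i x \<partial>\<mu>s) < \<infinity>"
    by (intro le_less_trans[OF SUP_least]) auto
  then show ?thesis
    using bound[OF \<mu>(1) M] M(2) \<open>A \<ge> 0\<close> \<open>B \<ge> 0\<close> \<open>\<Gamma> > 0\<close> \<open>\<alpha> \<ge> 0\<close> \<open>\<beta> \<ge> 0\<close>
    by (intro exI[of _ "\<beta> * A * M"] exI[of _ "\<alpha> + \<beta> * B"] exI[of _ \<Gamma>]) auto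
qed

theorem lemma3p8:
  fixes S :: "'w measure" and Mx :: "'a::polish_space \<Rightarrow> 'w measure"
    and X :: "real \<Rightarrow> 'w \<Rightarrow> 'a" and P :: "real \<Rightarrow> 'a \<Rightarrow> 'a measure"
    and \<mu> \<mu>s :: "'a measure" and V g :: "'a \<Rightarrow> real"
    and \<gamma> \<kappa> A B \<Gamma> :: real
  assumes markov: "markov_family S Mx X P"
    and init: "prob_borel \<mu>"
    and V_cont: "continuous_on UNIV V" and V_nonneg: "\<And>x. V x \<ge> 0"
    and feller: "\<And>t f. t \<ge> 0 \<Longrightarrow> continuous_on UNIV f \<Longrightarrow> bounded (range f) \<Longrightarrow>
        continuous_on UNIV (Pf P t f) \<and> bounded (range (Pf P t f))"
    and inv: "invariant P \<mu>s"
    and inv_unique: "\<And>\<nu>. invariant P \<nu> \<Longrightarrow> \<nu> = \<mu>s"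
    and \<gamma>_pos: "\<gamma> > 0" and \<kappa>_pos: "\<kappa> > 0"
    and conv: "\<exists>C :: 'a measure \<Rightarrow> real.
        (\<forall>\<nu>. prob_borel \<nu> \<and> (\<integral>\<^sup>+ x. ennreal (V x) \<partial>\<nu>) < \<infinity> \<longrightarrow>
           C \<nu> \<ge> 0 \<and> (\<forall>t\<ge>0. d_FM (\<nu> \<bind> P t) \<mu>s \<le> C \<nu> * exp (- \<gamma> * t))) \<and>
        (\<forall>x. C (return borel x) = \<kappa> * sqrt (V x + 1))"
    and lyap_consts: "A \<ge> 0" "B \<ge> 0" "\<Gamma> > 0"
    and lyap: "\<And>x t. t \<ge> 0 \<Longrightarrow>
        (\<integral>\<^sup>+ y. ennreal ((V y)\<^sup>2) \<partial>(P t x)) \<le> ennreal (A * exp (- \<Gamma> * t) * (V x)\<^sup>2 + B)"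
    and init_mom: "(\<integral>\<^sup>+ x. ennreal ((V x)\<^sup>2) \<partial>\<mu>) < \<infinity>"
    and g_lip: "\<exists>L. L-lipschitz_on UNIV g" and g_bdd: "bounded (range g)"
  shows "\<forall>p. 0 < p \<and> p \<le> 4 \<longrightarrow>
     (\<exists>At Bt \<Gamma>p. At \<ge> 0 \<and> Bt \<ge> 0 \<and> \<Gamma>p > 0 \<and>
        (\<forall>i t. i \<ge> 1 \<longrightarrow> t \<ge> 0 \<longrightarrow>
           (\<integral>\<^sup>+ x. (\<integral>\<^sup>+ \<omega>. ennreal (\<bar>Zinc P \<mu>s g X i \<omega>\<bar> powr p) \<partial>Mx x) \<partial>(\<mu> \<bind> P t))
             \<le> ennreal (At * exp (- \<Gamma>p * (real i + t)) + Bt)) \<and>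
        (SUP i\<in>{1..}. \<integral>\<^sup>+ x. (\<integral>\<^sup>+ \<omega>. ennreal (\<bar>Zinc P \<mu>s g X i \<omega>\<bar> powr p) \<partial>Mx x) \<partial>\<mu>s) < \<infinity>)"
proof -
  obtain L where L: "L-lipschitz_on UNIV g" using g_lip by blast
  obtain M where M: "\<And>x. \<bar>g x\<bar> \<le> M" using g_bdd by (auto simp: bounded_iff)
  have P: "\<And>t. t \<ge> 0 \<Longrightarrow> P t \<in> borel \<rightarrow>\<^sub>M prob_algebra borel"
    using markov_family_kernel[OF markov] .
  have V_meas [measurable]: "V \<in> borel_measurable borel"
    using V_cont by (rule borel_measurable_continuous_onI)
  have \<mu>s: "prob_space \<mu>s" using inv by (simp add: invariant_def prob_borel_def)
  define D where "D = max 1 (max L M) * \<kappa> / \<gamma> + 2 * M"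
  have "D \<ge> 0" using M[of undefined] \<kappa>_pos \<gamma>_pos unfolding D_def by auto
  have Z_le: "\<bar>Zinc P \<mu>s g X i \<omega>\<bar> \<le>
      D * (sqrt (V (X (real i) \<omega>) + 1) + sqrt (V (X (real i - 1) \<omega>) + 1))" for i \<omega>
    unfolding D_def using \<gamma>_pos \<kappa>_pos
    by (intro abs_Zinc_le_sqrt[OF P \<mu>s L M V_nonneg]
        d_FM_kernel_le_of_exp_convergence[OF conv P _ V_meas]) auto
  let ?c0 = "1 + 32 * D ^ 4" and ?c1 = "16 * D ^ 4"
  have G_le: "(\<integral>\<^sup>+\<omega>. ennreal (\<bar>Zinc P \<mu>s g X i \<omega>\<bar> powr p) \<partial>Mx x) \<le>
      ennreal ((?c0 + 2 * ?c1 * B) + ?c1 * A * (1 + exp \<Gamma>) * exp (- \<Gamma> * real i) * (V x)\<^sup>2)"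
    if "0 < p" "p \<le> 4" "i \<ge> 1" for p i x
    using that \<open>D \<ge> 0\<close> lyap_consts V_nonneg
    by (intro markov_family_nn_integral_two_times_le[OF markov _ _ lyap] powr_le_of_le_sqrt_sum Z_le) auto
  show ?thesis
    by (intro allI impI lyapunov_moment_bounds[where W = "\<lambda>x. (V x)\<^sup>2"
          and \<alpha> = "?c0 + 2 * ?c1 * B" and \<beta> = "?c1 * A * (1 + exp \<Gamma>)", OF P inv _ _ lyap])
      (use G_le \<open>D \<ge> 0\<close> lyap_consts init init_mom in auto)
qed

end
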